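(* Let $R$ be a commutative ring with identity, $M$ an $R$-module and $a\in R$. Then the $R$-module $M/a\Gamma_{a}(M)$ is $a$-reduced.
   Context: $\Gamma_{a}(M)=\{m\in M \mid a^{k}m=0 \text{ for some } k\in\mathbb{Z}^{+}\}$ and $a\Gamma_{a}(M)=\{am \mid m\in \Gamma_a(M)\}$, a submodule of $M$. An $R$-module $N$ is $a$-reduced if for all $n\in N$, $a^{2}n=0$ implies $an=0$. *)

theory Defs
  imports Complex_Main
begin

text \<open>Modules: we use the locale module of HOL (theory Modules), with ring
  'a :: comm_ring_1 and module carrier the type 'b :: ab_group_add, scalar action scale.\<close>

definition Gamma :: "('a::comm_ring_1 \<Rightarrow> 'b::ab_group_add \<Rightarrow> 'b) \<Rightarrow> 'a \<Rightarrow> 'b set" where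
  "Gamma scale a = {m. \<exists>k::nat. k > 0 \<and> scale (a ^ k) m = 0}"

definition a_Gamma :: "('a::comm_ring_1 \<Rightarrow> 'b::ab_group_add \<Rightarrow> 'b) \<Rightarrow> 'a \<Rightarrow> 'b set" where
  "a_Gamma scale a = {scale a m | m. m \<in> Gamma scale a}"

definition coset :: "'b::ab_group_add set \<Rightarrow> 'b \<Rightarrow> 'b set" where
  "coset N m = (\<lambda>n. m + n) ` N"

definition quot_carrier :: "'b::ab_group_add set \<Rightarrow> 'b set set" where
  "quot_carrier N = range (coset N)"

definition quot_scale :: "('a \<Rightarrow> 'b::ab_group_add \<Rightarrow> 'b) \<Rightarrow> 'b set \<Rightarrow> 'a \<Rightarrow> 'b set \<Rightarrow> 'b set" where
  "quot_scale scale N r C = coset N (scale r (SOME m. m \<in> C))"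

definition quot_zero :: "'b::ab_group_add set \<Rightarrow> 'b set" where
  "quot_zero N = coset N 0"

definition a_reduced :: "'c set \<Rightarrow> ('a::comm_ring_1 \<Rightarrow> 'c \<Rightarrow> 'c) \<Rightarrow> 'c \<Rightarrow> 'a \<Rightarrow> bool" where
  "a_reduced X s z a \<longleftrightarrow> (\<forall>n\<in>X. s (a ^ 2) n = z \<longrightarrow> s a n = z)"

end

theory Submission
  imports Defs
begin

text \<open>If \<open>a\<^sup>2 m = a g\<close> with \<open>g \<in> \<Gamma>\<^sub>a(M)\<close>, then \<open>a (a m - g) = 0\<close> puts \<open>a m - g\<close>, hence \<open>a m\<close>,
  hence \<open>m\<close> into \<open>\<Gamma>\<^sub>a(M)\<close>; so \<open>a m \<in> a \<Gamma>\<^sub>a(M)\<close>.\<close>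

context module
begin

lemma Gamma_iff: "m \<in> Gamma scale a \<longleftrightarrow> (\<exists>k. scale (a ^ k) m = 0)"
proof
  assume "\<exists>k. scale (a ^ k) m = 0"
  then obtain k where k: "scale (a ^ k) m = 0" by blast
  have "scale (a ^ Suc k) m = 0"
    using k by (simp flip: scale_scale add: power_Suc2)
  then show "m \<in> Gamma scale a"
    unfolding Gamma_def by blast
qed (auto simp: Gamma_def)

lemma scale_power_eq_0_mono:
  assumes "scale (a ^ k) m = 0" and "k \<le> j"
  shows "scale (a ^ j) m = 0"
proof -
  have "a ^ j = a ^ (j - k) * a ^ k"
    using \<open>k \<le> j\<close> by (simp add: power_add[symmetric])
  then show ?thesis
    using assms(1) by (simp flip: scale_scale)
qed

lemma subspace_Gamma: "subspace (Gamma scale a)"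
proof (rule subspaceI)
  show "0 \<in> Gamma scale a"
    by (auto simp: Gamma_iff intro: exI[of _ 0])
next
  fix x y assume "x \<in> Gamma scale a" "y \<in> Gamma scale a"
  then obtain k l where "scale (a ^ k) x = 0" "scale (a ^ l) y = 0"
    by (auto simp: Gamma_iff)
  then have "scale (a ^ max k l) x = 0" "scale (a ^ max k l) y = 0"
    by (auto intro: scale_power_eq_0_mono)
  then show "x + y \<in> Gamma scale a"
    unfolding Gamma_iff by (metis add_0 scale_right_distrib)
next
  fix c x assume "x \<in> Gamma scale a"
  then obtain k where "scale (a ^ k) x = 0"
    by (auto simp: Gamma_iff)
  then have "scale (a ^ k) (scale c x) = 0"
    by (metis scale_left_commute scale_zero_right)
  then show "scale c x \<in> Gamma scale a"
    by (auto simp: Gamma_iff)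
qed

lemma scale_mem_Gamma_iff: "scale a m \<in> Gamma scale a \<longleftrightarrow> m \<in> Gamma scale a"
proof
  assume "scale a m \<in> Gamma scale a"
  then obtain k where "scale (a ^ k) (scale a m) = 0"
    by (auto simp: Gamma_iff)
  then have "scale (a ^ Suc k) m = 0"
    by (simp add: mult.commute)
  then show "m \<in> Gamma scale a"
    unfolding Gamma_iff by (rule exI)
qed (rule subspace_scale[OF subspace_Gamma])

lemma a_Gamma_eq_image: "a_Gamma scale a = scale a ` Gamma scale a"
  by (auto simp: a_Gamma_def)

lemma subspace_a_Gamma: "subspace (a_Gamma scale a)"
  unfolding a_Gamma_eq_image
  by (rule module_hom.subspace_image[OF module_hom_scale_self subspace_Gamma])

lemma scale_square_mem_a_Gamma:
  assumes "scale (a ^ 2) m \<in> a_Gamma scale a"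
  shows "scale a m \<in> a_Gamma scale a"
proof -
  obtain g where g: "g \<in> Gamma scale a" and eq: "scale (a ^ 2) m = scale a g"
    using assms by (auto simp: a_Gamma_def)
  have "scale a (scale a m - g) = 0"
    using eq by (simp add: scale_right_diff_distrib power2_eq_square)
  then have "scale a m - g \<in> Gamma scale a"
    by (auto simp: Gamma_iff intro: exI[of _ 1])
  then have "scale a m \<in> Gamma scale a"
    using subspace_add[OF subspace_Gamma _ g] by fastforce
  then show ?thesis
    by (auto simp: scale_mem_Gamma_iff a_Gamma_def)
qed

lemma coset_eq_iff:
  assumes "subspace N"
  shows "coset N x = coset N y \<longleftrightarrow> x - y \<in> N"
proof
  assume "coset N x = coset N y"
  moreover have "x \<in> coset N x"
    using subspace_0[OF assms] by (force simp: coset_def)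
  ultimately show "x - y \<in> N"
    by (auto simp: coset_def)
next
  assume xy: "x - y \<in> N"
  have "x + n \<in> coset N y" if "n \<in> N" for n
    using subspace_add[OF assms xy that] by (force simp: coset_def)
  moreover have "y + n \<in> coset N x" if "n \<in> N" for n
    using subspace_add[OF assms subspace_neg[OF assms xy] that] by (force simp: coset_def)
  ultimately show "coset N x = coset N y"
    by (auto simp: coset_def)
qed

lemma quot_scale_coset:
  assumes "subspace N"
  shows "quot_scale scale N r (coset N m) = coset N (scale r m)"
proof -
  let ?m' = "SOME m'. m' \<in> coset N m"
  have "m \<in> coset N m"
    using subspace_0[OF assms] by (force simp: coset_def)
  then have "?m' \<in> coset N m"
    by (rule someI)
  then have "?m' - m \<in> N"
    by (auto simp: coset_def)
  then have "scale r ?m' - scale r m \<in> N"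
    using subspace_scale[OF assms] by (fastforce simp: scale_right_diff_distrib[symmetric])
  then show ?thesis
    by (simp add: quot_scale_def coset_eq_iff[OF assms])
qed

lemma a_reduced_quot_iff:
  assumes "subspace N"
  shows "a_reduced (quot_carrier N) (quot_scale scale N) (quot_zero N) a \<longleftrightarrow>
    (\<forall>m. scale (a ^ 2) m \<in> N \<longrightarrow> scale a m \<in> N)"
  by (auto simp: a_reduced_def quot_carrier_def quot_zero_def
      quot_scale_coset[OF assms] coset_eq_iff[OF assms])

end

theorem mainTheorem4:
  fixes scale :: "'a::comm_ring_1 \<Rightarrow> 'b::ab_group_add \<Rightarrow> 'b" and a :: 'a
  assumes "module scale"
  shows "a_reduced (quot_carrier (a_Gamma scale a)) (quot_scale scale (a_Gamma scale a))
           (quot_zero (a_Gamma scale a)) a"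
proof -
  interpret module scale by fact
  show ?thesis
    unfolding a_reduced_quot_iff[OF subspace_a_Gamma]
    using scale_square_mem_a_Gamma by blast
qed

end
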